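(* Consider the $L$-layer LSTM described in the context, with $L\in\mathbb{N}$, and let $k\in\mathbb{Z}_{\ge 0}$. For every $l\in[L]$, the set $\mathcal{S}^{(l)}(k)=\mathcal{C}^{(l)}(k)\times\mathcal{H}^{(l)}(k)$ is invariant: for every input sequence $x(t)\in[-x_{\max},x_{\max}]^{n_x}$, $t\ge 0$, if $s^{(l)}(0)=(c^{(l)}(0),h^{(l)}(0))\in\mathcal{S}^{(l)}(k)$, then $s^{(l)}(t)=(c^{(l)}(t),h^{(l)}(t))\in\mathcal{S}^{(l)}(k)$ for all $t\in\mathbb{Z}_{\ge 0}$. Moreover, $\mathcal{S}^{(l)}(k+1)\subseteq\mathcal{S}^{(l)}(k)$ for all $k\in\mathbb{Z}_{\ge 0}$.
   Context: LSTM: fix $L\in\mathbb{N}$, dimensions $n_x,n_c$, and $x_{\max}>0$. For $l\in[L]$ let $n^{(l)}=n_x$ if $l=1$, $n^{(l)}=n_c$ if $l\ge2$; weights $W^{(l)}_*\in\mathbb{R}^{n_c\times n^{(l)}}$, $U^{(l)}_*\in\mathbb{R}^{n_c\times n_c}$, biases $b^{(l)}_*\in\mathbb{R}^{n_c}$, $*\in\{f,i,c,o\}$. With $\sigma(w)=1/(1+e^{-w})$, $\phi=\tanh$ (componentwise) and $\odot$ the componentwise product, for $t\in\mathbb{Z}_{\ge0}$: $c^{(l)}(t+1)=\sigma(W^{(l)}_f x^{(l)}(t)+U^{(l)}_f h^{(l)}(t)+b^{(l)}_f)\odot c^{(l)}(t)+\sigma(W^{(l)}_i x^{(l)}(t)+U^{(l)}_i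 h^{(l)}(t)+b^{(l)}_i)\odot\phi(W^{(l)}_c x^{(l)}(t)+U^{(l)}_c h^{(l)}(t)+b^{(l)}_c)$, $h^{(l)}(t+1)=\sigma(W^{(l)}_o x^{(l)}(t)+U^{(l)}_o h^{(l)}(t)+b^{(l)}_o)\odot\phi(c^{(l)}(t+1))$, where $x^{(1)}(t)=x(t)\in[-x_{\max},x_{\max}]^{n_x}$ and $x^{(l)}(t)=h^{(l-1)}(t+1)$ for $l\ge2$; $c^{(l)}\in\mathbb{R}^{n_c}$, $h^{(l)}\in(-1,1)^{n_c}$, and $s^{(l)}(t)=(c^{(l)}(t),h^{(l)}(t))$. Invariant-set quantities: let $x^{(l)}_{\max}=x_{\max}$ if $l=1$ and $=1$ if $l\ge2$. For a matrix $A$, $|A|$ is the entrywise absolute value; $\mathbf{1}_n$ the all-ones vector; $v_+=(\max\{v_{(j)},0\})_j$; $\|v\|_\infty=\max_j|v_{(j)}|$. For $\eta\ge0$ and $*\in\{f,i,o\}$: $G^{(l)}_*(\eta)=\|(x^{(l)}_{\max}|W^{(l)}_*|\mathbf{1}_{n^{(l)}}+\eta|U^{(l)}_*|\mathbf{1}_{n_c}+b^{(l)}_* )_+\|_\infty$, $G^{(l)}_c(\eta)=\|x^{(l)}_{\max}|W^{(l)}_c|\mathbf{1}_{n^{(l)}}+\eta|U^{(l)}_c|\mathbf{1}_{n_c}+|b^{(l)}_c|\|_\infty$. With $\eta^{(l)}(-1)=1$ and for $k\ge0$: $\overline{\sigma}^{(l)}_*(k)=\sigma(G^{(l)}_*(\eta^{(l)}(k-1)))$,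 $\overline{\phi}^{(l)}_c(k)=\phi(G^{(l)}_c(\eta^{(l)}(k-1)))$, $\overline{c}^{(l)}(k)=\overline{\sigma}^{(l)}_i(k)\overline{\phi}^{(l)}_c(k)/(1-\overline{\sigma}^{(l)}_f(k))$, $\eta^{(l)}(k)=\phi(\overline{c}^{(l)}(k))\overline{\sigma}^{(l)}_o(k)$. Finally $\mathcal{C}^{(l)}(k)=\{c\in\mathbb{R}^{n_c}:\|c\|_\infty\le\overline{c}^{(l)}(k)\}$ and $\mathcal{H}^{(l)}(k)=\{h\in\mathbb{R}^{n_c}:\|h\|_\infty\le\phi(\overline{c}^{(l)}(k))\overline{\sigma}^{(l)}_o(k)\}$. *)

theory Defs
  imports Complex_Main
begin

text \<open>Vectors in R^n are represented as functions nat => real, only the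
  components j < n being relevant; an n_c x n matrix A is nat => nat => real
  with entries A j m for j < n_c, m < n.\<close>

datatype gate = Gf | Gi | Gc | Go

definition sigmoid :: "real \<Rightarrow> real" where
  "sigmoid w = 1 / (1 + exp (- w))"

definition mv :: "nat \<Rightarrow> (nat \<Rightarrow> nat \<Rightarrow> real) \<Rightarrow> (nat \<Rightarrow> real) \<Rightarrow> nat \<Rightarrow> real" where
  "mv n A v j = (\<Sum>m<n. A j m * v m)"

definition norm_inf :: "nat \<Rightarrow> (nat \<Rightarrow> real) \<Rightarrow> real" where
  "norm_inf n v = Max (insert 0 ((\<lambda>j. \<bar>v j\<bar>) ` {..<n}))"

definition nin :: "nat \<Rightarrow> nat \<Rightarrow> nat \<Rightarrow> nat" where
  "nin nx nc l = (if l = 1 then nx else nc)"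

definition xmaxl :: "real \<Rightarrow> nat \<Rightarrow> real" where
  "xmaxl xmax l = (if l = 1 then xmax else 1)"

definition lstm_traj ::
  "nat \<Rightarrow> nat \<Rightarrow> nat \<Rightarrow> (nat \<Rightarrow> gate \<Rightarrow> nat \<Rightarrow> nat \<Rightarrow> real) \<Rightarrow> (nat \<Rightarrow> gate \<Rightarrow> nat \<Rightarrow> nat \<Rightarrow> real)
   \<Rightarrow> (nat \<Rightarrow> gate \<Rightarrow> nat \<Rightarrow> real) \<Rightarrow> (nat \<Rightarrow> nat \<Rightarrow> real)
   \<Rightarrow> (nat \<Rightarrow> nat \<Rightarrow> nat \<Rightarrow> real) \<Rightarrow> (nat \<Rightarrow> nat \<Rightarrow> nat \<Rightarrow> real) \<Rightarrow> bool" where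
  "lstm_traj L nx nc W U b x c h \<longleftrightarrow>
    (\<forall>l\<in>{1..L}. \<forall>t. \<forall>j<nc.
      (let xin = (if l = 1 then x t else h (l - 1) (Suc t));
           z = (\<lambda>g. mv (nin nx nc l) (W l g) xin j + mv nc (U l g) (h l t) j + b l g j)
       in c l (Suc t) j = sigmoid (z Gf) * c l t j + sigmoid (z Gi) * tanh (z Gc)
        \<and> h l (Suc t) j = sigmoid (z Go) * tanh (c l (Suc t) j)))"

definition Ggate ::
  "nat \<Rightarrow> nat \<Rightarrow> real \<Rightarrow> (nat \<Rightarrow> gate \<Rightarrow> nat \<Rightarrow> nat \<Rightarrow> real) \<Rightarrow> (nat \<Rightarrow> gate \<Rightarrow> nat \<Rightarrow> nat \<Rightarrow> real)
   \<Rightarrow> (nat \<Rightarrow> gate \<Rightarrow> nat \<Rightarrow> real) \<Rightarrow> nat \<Rightarrow> gate \<Rightarrow> real \<Rightarrow> real" where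
  "Ggate nx nc xmax W U b l g \<eta> =
     norm_inf nc (\<lambda>j. max (xmaxl xmax l * (\<Sum>m<nin nx nc l. \<bar>W l g j m\<bar>)
                            + \<eta> * (\<Sum>m<nc. \<bar>U l g j m\<bar>) + b l g j) 0)"

definition Gcell ::
  "nat \<Rightarrow> nat \<Rightarrow> real \<Rightarrow> (nat \<Rightarrow> gate \<Rightarrow> nat \<Rightarrow> nat \<Rightarrow> real) \<Rightarrow> (nat \<Rightarrow> gate \<Rightarrow> nat \<Rightarrow> nat \<Rightarrow> real)
   \<Rightarrow> (nat \<Rightarrow> gate \<Rightarrow> nat \<Rightarrow> real) \<Rightarrow> nat \<Rightarrow> real \<Rightarrow> real" where
  "Gcell nx nc xmax W U b l \<eta> =
     norm_inf nc (\<lambda>j. xmaxl xmax l * (\<Sum>m<nin nx nc l. \<bar>W l Gc j m\<bar>)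
                      + \<eta> * (\<Sum>m<nc. \<bar>U l Gc j m\<bar>) + \<bar>b l Gc j\<bar>)"

definition cbar_of ::
  "nat \<Rightarrow> nat \<Rightarrow> real \<Rightarrow> (nat \<Rightarrow> gate \<Rightarrow> nat \<Rightarrow> nat \<Rightarrow> real) \<Rightarrow> (nat \<Rightarrow> gate \<Rightarrow> nat \<Rightarrow> nat \<Rightarrow> real)
   \<Rightarrow> (nat \<Rightarrow> gate \<Rightarrow> nat \<Rightarrow> real) \<Rightarrow> nat \<Rightarrow> real \<Rightarrow> real" where
  "cbar_of nx nc xmax W U b l \<eta> =
     sigmoid (Ggate nx nc xmax W U b l Gi \<eta>) * tanh (Gcell nx nc xmax W U b l \<eta>)
       / (1 - sigmoid (Ggate nx nc xmax W U b l Gf \<eta>))"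

text \<open>eta_prev ... l k = eta^(l)(k-1); so eta_prev ... l 0 = eta^(l)(-1) = 1.\<close>
fun eta_prev ::
  "nat \<Rightarrow> nat \<Rightarrow> real \<Rightarrow> (nat \<Rightarrow> gate \<Rightarrow> nat \<Rightarrow> nat \<Rightarrow> real) \<Rightarrow> (nat \<Rightarrow> gate \<Rightarrow> nat \<Rightarrow> nat \<Rightarrow> real)
   \<Rightarrow> (nat \<Rightarrow> gate \<Rightarrow> nat \<Rightarrow> real) \<Rightarrow> nat \<Rightarrow> nat \<Rightarrow> real" where
  "eta_prev nx nc xmax W U b l 0 = 1"
| "eta_prev nx nc xmax W U b l (Suc k) =
     tanh (cbar_of nx nc xmax W U b l (eta_prev nx nc xmax W U b l k))
       * sigmoid (Ggate nx nc xmax W U b l Go (eta_prev nx nc xmax W U b l k))"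

definition cbar ::
  "nat \<Rightarrow> nat \<Rightarrow> real \<Rightarrow> (nat \<Rightarrow> gate \<Rightarrow> nat \<Rightarrow> nat \<Rightarrow> real) \<Rightarrow> (nat \<Rightarrow> gate \<Rightarrow> nat \<Rightarrow> nat \<Rightarrow> real)
   \<Rightarrow> (nat \<Rightarrow> gate \<Rightarrow> nat \<Rightarrow> real) \<Rightarrow> nat \<Rightarrow> nat \<Rightarrow> real" where
  "cbar nx nc xmax W U b l k = cbar_of nx nc xmax W U b l (eta_prev nx nc xmax W U b l k)"

definition hbar ::
  "nat \<Rightarrow> nat \<Rightarrow> real \<Rightarrow> (nat \<Rightarrow> gate \<Rightarrow> nat \<Rightarrow> nat \<Rightarrow> real) \<Rightarrow> (nat \<Rightarrow> gate \<Rightarrow> nat \<Rightarrow> nat \<Rightarrow> real)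
   \<Rightarrow> (nat \<Rightarrow> gate \<Rightarrow> nat \<Rightarrow> real) \<Rightarrow> nat \<Rightarrow> nat \<Rightarrow> real" where
  "hbar nx nc xmax W U b l k =
     tanh (cbar nx nc xmax W U b l k)
       * sigmoid (Ggate nx nc xmax W U b l Go (eta_prev nx nc xmax W U b l k))"

definition Cset where
  "Cset nx nc xmax W U b l k = {c :: nat \<Rightarrow> real. norm_inf nc c \<le> cbar nx nc xmax W U b l k}"

definition Hset where
  "Hset nx nc xmax W U b l k = {h :: nat \<Rightarrow> real. norm_inf nc h \<le> hbar nx nc xmax W U b l k}"

definition Sset where
  "Sset nx nc xmax W U b l k = Cset nx nc xmax W U b l k \<times> Hset nx nc xmax W U b l k"

end

theory Submission
  imports Defs
begin

(* The gate bounds G_*(eta) and the cell bound cbar_of(eta) are monotone in eta; since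
   eta(0) <= 1 = eta(-1), induction shows that eta(k) is decreasing, which gives the nesting
   S(k+1) <= S(k) at once.  For invariance, a hidden state in H(k) is bounded by
   eta(k) <= eta(k-1), so every gate pre-activation is at most G_*(eta(k-1)) and the candidate
   pre-activation is at most G_c(eta(k-1)) in absolute value.  With the resulting gate bounds
   the new cell state obeys |c'| <= sigma_f * cbar + sigma_i * phi_c = cbar, since cbar(k) is
   exactly the fixed point of this affine bound, and the new hidden state obeys
   |h'| <= sigma_o * tanh(cbar). *)

lemma sigmoid_pos: "0 < sigmoid w"
  unfolding sigmoid_def by (simp add: add_pos_pos)

lemma sigmoid_less_1: "sigmoid w < 1"
  unfolding sigmoid_def by (simp add: add_pos_pos)

lemma sigmoid_nonneg: "0 \<le> sigmoid w"
  using sigmoid_pos less_imp_le by blast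

lemma sigmoid_mono: "a \<le> b \<Longrightarrow> sigmoid a \<le> sigmoid b"
  unfolding sigmoid_def by (simp add: frac_le add_pos_pos)

lemma abs_sigmoid_mult_tanh_le_1: "\<bar>sigmoid a * tanh c\<bar> \<le> 1"
proof -
  have "\<bar>tanh c\<bar> \<le> 1"
    using tanh_real_lt_1[of "\<bar>c\<bar>"] by simp
  moreover have "\<bar>sigmoid a\<bar> \<le> 1"
    using sigmoid_pos[of a] sigmoid_less_1[of a] by simp
  ultimately show ?thesis
    by (simp add: abs_mult mult_le_one)
qed

lemma norm_inf_nonneg: "0 \<le> norm_inf n v"
  unfolding norm_inf_def by (simp add: Max_ge_iff)

lemma abs_le_norm_inf: "j < n \<Longrightarrow> \<bar>v j\<bar> \<le> norm_inf n v"
  unfolding norm_inf_def by (simp add: Max_ge_iff)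

lemma norm_inf_le_iff: "norm_inf n v \<le> B \<longleftrightarrow> 0 \<le> B \<and> (\<forall>j<n. \<bar>v j\<bar> \<le> B)"
  unfolding norm_inf_def by auto

lemma norm_inf_mono:
  assumes "\<And>j. j < n \<Longrightarrow> \<bar>v j\<bar> \<le> \<bar>w j\<bar>"
  shows "norm_inf n v \<le> norm_inf n w"
  using assms abs_le_norm_inf[of _ n w] norm_inf_nonneg[of n w]
  by (force simp: norm_inf_le_iff)

lemma abs_mv_le:
  assumes "\<And>m. m < n \<Longrightarrow> \<bar>v m\<bar> \<le> B"
  shows "\<bar>mv n A v j\<bar> \<le> B * (\<Sum>m<n. \<bar>A j m\<bar>)"
proof -
  have "\<bar>mv n A v j\<bar> \<le> (\<Sum>m<n. \<bar>A j m\<bar> * \<bar>v m\<bar>)"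
    unfolding mv_def abs_mult[symmetric] by (rule sum_abs)
  also have "\<dots> \<le> (\<Sum>m<n. \<bar>A j m\<bar> * B)"
    by (intro sum_mono mult_left_mono assms) auto
  finally show ?thesis
    by (simp add: sum_distrib_left mult.commute)
qed

lemma abs_cell_update_le:
  fixes zf zi zc gf gi gc c :: real
  defines "cb \<equiv> sigmoid gi * tanh gc / (1 - sigmoid gf)"
  assumes "zf \<le> gf" and "zi \<le> gi" and "\<bar>zc\<bar> \<le> gc" and "\<bar>c\<bar> \<le> cb"
  shows "\<bar>sigmoid zf * c + sigmoid zi * tanh zc\<bar> \<le> cb"
proof -
  have "\<bar>sigmoid zf * c + sigmoid zi * tanh zc\<bar> \<le> sigmoid zf * \<bar>c\<bar> + sigmoid zi * \<bar>tanh zc\<bar>"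
    using sigmoid_pos[of zf] sigmoid_pos[of zi] abs_triangle_ineq
    by (metis abs_mult abs_of_pos)
  also have "\<dots> \<le> sigmoid gf * cb + sigmoid gi * tanh gc"
    using assms sigmoid_nonneg sigmoid_mono
    by (intro add_mono mult_mono) (auto simp flip: tanh_real_abs)
  also have "\<dots> = cb"
    using sigmoid_less_1[of gf] unfolding cb_def by (simp add: field_simps)
  finally show ?thesis .
qed

lemma abs_hidden_update_le:
  fixes zo go c cb :: real
  assumes "zo \<le> go" and "\<bar>c\<bar> \<le> cb"
  shows "\<bar>sigmoid zo * tanh c\<bar> \<le> tanh cb * sigmoid go"
proof -
  have "\<bar>tanh c\<bar> \<le> tanh cb"
    using assms(2) by (metis tanh_real_abs tanh_real_le_iff)
  then have "\<bar>sigmoid zo * tanh c\<bar> \<le> sigmoid go * tanh cb"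
    using assms(1) sigmoid_nonneg sigmoid_mono by (auto simp: abs_mult intro: mult_mono)
  then show ?thesis
    by (simp add: mult.commute)
qed

lemma Ggate_mono:
  assumes "e \<le> e'"
  shows "Ggate nx nc xmax W U b l g e \<le> Ggate nx nc xmax W U b l g e'"
  unfolding Ggate_def
proof (rule norm_inf_mono)
  fix j
  have "e * (\<Sum>m<nc. \<bar>U l g j m\<bar>) \<le> e' * (\<Sum>m<nc. \<bar>U l g j m\<bar>)"
    using assms by (intro mult_right_mono) (auto intro: sum_nonneg)
  then show "\<bar>max (xmaxl xmax l * (\<Sum>m<nin nx nc l. \<bar>W l g j m\<bar>) + e * (\<Sum>m<nc. \<bar>U l g j m\<bar>) + b l g j) 0\<bar>
    \<le> \<bar>max (xmaxl xmax l * (\<Sum>m<nin nx nc l. \<bar>W l g j m\<bar>) + e' * (\<Sum>m<nc. \<bar>U l g j m\<bar>) + b l g j) 0\<bar>"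
    by simp
qed

lemma Gcell_mono:
  assumes "0 \<le> xmax" and "0 \<le> e" and "e \<le> e'"
  shows "Gcell nx nc xmax W U b l e \<le> Gcell nx nc xmax W U b l e'"
  unfolding Gcell_def
proof (rule norm_inf_mono)
  fix j
  have "0 \<le> xmaxl xmax l * (\<Sum>m<nin nx nc l. \<bar>W l Gc j m\<bar>)"
    using assms(1) by (auto simp: xmaxl_def intro: sum_nonneg)
  moreover have "0 \<le> e * (\<Sum>m<nc. \<bar>U l Gc j m\<bar>)"
    and "e * (\<Sum>m<nc. \<bar>U l Gc j m\<bar>) \<le> e' * (\<Sum>m<nc. \<bar>U l Gc j m\<bar>)"
    using assms(2,3) by (auto intro: mult_right_mono sum_nonneg)
  ultimately show "\<bar>xmaxl xmax l * (\<Sum>m<nin nx nc l. \<bar>W l Gc j m\<bar>) + e * (\<Sum>m<nc. \<bar>U l Gc j m\<bar>) + \<bar>b l Gc j\<bar>\<bar>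
    \<le> \<bar>xmaxl xmax l * (\<Sum>m<nin nx nc l. \<bar>W l Gc j m\<bar>) + e' * (\<Sum>m<nc. \<bar>U l Gc j m\<bar>) + \<bar>b l Gc j\<bar>\<bar>"
    by simp
qed

lemma Gcell_nonneg: "0 \<le> Gcell nx nc xmax W U b l e"
  unfolding Gcell_def by (rule norm_inf_nonneg)

lemma cbar_of_nonneg: "0 \<le> cbar_of nx nc xmax W U b l e"
  unfolding cbar_of_def
  using sigmoid_nonneg sigmoid_less_1 Gcell_nonneg by (simp add: less_imp_le)

lemma cbar_of_mono:
  assumes "0 \<le> xmax" and "0 \<le> e" and "e \<le> e'"
  shows "cbar_of nx nc xmax W U b l e \<le> cbar_of nx nc xmax W U b l e'"
proof -
  let ?si = "\<lambda>e. sigmoid (Ggate nx nc xmax W U b l Gi e)"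
  let ?sf = "\<lambda>e. sigmoid (Ggate nx nc xmax W U b l Gf e)"
  let ?tc = "\<lambda>e. tanh (Gcell nx nc xmax W U b l e)"
  have "?si e * ?tc e \<le> ?si e' * ?tc e'"
  proof (rule mult_mono)
    show "?si e \<le> ?si e'" by (intro sigmoid_mono Ggate_mono assms(3))
    show "?tc e \<le> ?tc e'" using Gcell_mono[OF assms] by simp
  qed (simp_all add: sigmoid_nonneg Gcell_nonneg)
  moreover have "?sf e \<le> ?sf e'"
    by (intro sigmoid_mono Ggate_mono assms(3))
  ultimately show ?thesis
    unfolding cbar_of_def
    by (intro frac_le) (simp_all add: sigmoid_less_1 sigmoid_nonneg Gcell_nonneg)
qed

lemma eta_prev_nonneg: "0 \<le> eta_prev nx nc xmax W U b l k"
  by (cases k) (simp_all add: cbar_of_nonneg sigmoid_nonneg)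

lemma eta_prev_le_1: "eta_prev nx nc xmax W U b l k \<le> 1"
proof (cases k)
  case (Suc k')
  then show ?thesis
    using tanh_real_lt_1 sigmoid_less_1 sigmoid_nonneg cbar_of_nonneg
    by (simp add: less_imp_le mult_le_one)
qed simp

lemma decseq_eta_prev:
  assumes "0 \<le> xmax"
  shows "decseq (eta_prev nx nc xmax W U b l)"
proof (rule decseq_SucI)
  fix k
  show "eta_prev nx nc xmax W U b l (Suc k) \<le> eta_prev nx nc xmax W U b l k"
  proof (induction k)
    case 0
    show ?case using eta_prev_le_1[of nx nc xmax W U b l 1] by simp
  next
    case (Suc k)
    let ?e = "eta_prev nx nc xmax W U b l"
    have "tanh (cbar_of nx nc xmax W U b l (?e (Suc k))) \<le> tanh (cbar_of nx nc xmax W U b l (?e k))"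
      using cbar_of_mono[OF assms eta_prev_nonneg Suc.IH] by simp
    moreover have "sigmoid (Ggate nx nc xmax W U b l Go (?e (Suc k)))
        \<le> sigmoid (Ggate nx nc xmax W U b l Go (?e k))"
      by (intro sigmoid_mono Ggate_mono Suc.IH)
    ultimately show ?case
      by (simp only: eta_prev.simps) (intro mult_mono; simp add: sigmoid_nonneg cbar_of_nonneg)
  qed
qed

lemma hbar_eq_eta_prev: "hbar nx nc xmax W U b l k = eta_prev nx nc xmax W U b l (Suc k)"
  unfolding hbar_def cbar_def by simp

lemma decseq_cbar:
  assumes "0 \<le> xmax"
  shows "decseq (cbar nx nc xmax W U b l)"
  unfolding cbar_def
  by (intro decseq_SucI cbar_of_mono assms eta_prev_nonneg decseq_SucD[OF decseq_eta_prev])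

lemma mem_Sset_iff:
  "(c, h) \<in> Sset nx nc xmax W U b l k \<longleftrightarrow>
     (\<forall>j<nc. \<bar>c j\<bar> \<le> cbar nx nc xmax W U b l k) \<and> (\<forall>j<nc. \<bar>h j\<bar> \<le> hbar nx nc xmax W U b l k)"
proof -
  have "0 \<le> cbar nx nc xmax W U b l k" and "0 \<le> hbar nx nc xmax W U b l k"
    unfolding cbar_def hbar_eq_eta_prev by (rule cbar_of_nonneg eta_prev_nonneg)+
  then show ?thesis
    unfolding Sset_def Cset_def Hset_def norm_inf_le_iff by simp
qed

lemma Sset_Suc_subset:
  assumes "0 \<le> xmax"
  shows "Sset nx nc xmax W U b l (Suc k) \<subseteq> Sset nx nc xmax W U b l k"
proof -
  have "cbar nx nc xmax W U b l (Suc k) \<le> cbar nx nc xmax W U b l k"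
    by (rule decseq_SucD[OF decseq_cbar[OF assms]])
  moreover have "hbar nx nc xmax W U b l (Suc k) \<le> hbar nx nc xmax W U b l k"
    unfolding hbar_eq_eta_prev by (rule decseq_SucD[OF decseq_eta_prev[OF assms]])
  ultimately show ?thesis
    unfolding Sset_def Cset_def Hset_def by auto
qed

definition lstm_preact ::
  "nat \<Rightarrow> nat \<Rightarrow> (nat \<Rightarrow> gate \<Rightarrow> nat \<Rightarrow> nat \<Rightarrow> real) \<Rightarrow> (nat \<Rightarrow> gate \<Rightarrow> nat \<Rightarrow> nat \<Rightarrow> real)
   \<Rightarrow> (nat \<Rightarrow> gate \<Rightarrow> nat \<Rightarrow> real) \<Rightarrow> nat \<Rightarrow> (nat \<Rightarrow> real) \<Rightarrow> (nat \<Rightarrow> real) \<Rightarrow> gate \<Rightarrow> nat \<Rightarrow> real" where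
  "lstm_preact nx nc W U b l xin h g j = mv (nin nx nc l) (W l g) xin j + mv nc (U l g) h j + b l g j"

lemma lstm_preact_le_Ggate:
  assumes "\<And>m. m < nin nx nc l \<Longrightarrow> \<bar>xin m\<bar> \<le> xmaxl xmax l"
    and "\<And>m. m < nc \<Longrightarrow> \<bar>h m\<bar> \<le> e" and "j < nc"
  shows "lstm_preact nx nc W U b l xin h g j \<le> Ggate nx nc xmax W U b l g e"
proof -
  have "lstm_preact nx nc W U b l xin h g j
      \<le> xmaxl xmax l * (\<Sum>m<nin nx nc l. \<bar>W l g j m\<bar>) + e * (\<Sum>m<nc. \<bar>U l g j m\<bar>) + b l g j"
    using abs_mv_le[of "nin nx nc l" xin "xmaxl xmax l" "W l g" j, OF assms(1)]
      abs_mv_le[of nc h e "U l g" j, OF assms(2)]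
    unfolding lstm_preact_def by linarith
  also have "\<dots> \<le> Ggate nx nc xmax W U b l g e"
    unfolding Ggate_def by (rule order_trans[OF _ abs_le_norm_inf[OF assms(3)]]) simp
  finally show ?thesis .
qed

lemma abs_lstm_preact_le_Gcell:
  assumes "\<And>m. m < nin nx nc l \<Longrightarrow> \<bar>xin m\<bar> \<le> xmaxl xmax l"
    and "\<And>m. m < nc \<Longrightarrow> \<bar>h m\<bar> \<le> e" and "j < nc"
  shows "\<bar>lstm_preact nx nc W U b l xin h Gc j\<bar> \<le> Gcell nx nc xmax W U b l e"
proof -
  have "\<bar>lstm_preact nx nc W U b l xin h Gc j\<bar>
      \<le> xmaxl xmax l * (\<Sum>m<nin nx nc l. \<bar>W l Gc j m\<bar>) + e * (\<Sum>m<nc. \<bar>U l Gc j m\<bar>) + \<bar>b l Gc j\<bar>"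
    using abs_mv_le[of "nin nx nc l" xin "xmaxl xmax l" "W l Gc" j, OF assms(1)]
      abs_mv_le[of nc h e "U l Gc" j, OF assms(2)]
    unfolding lstm_preact_def by linarith
  also have "\<dots> \<le> Gcell nx nc xmax W U b l e"
    unfolding Gcell_def by (rule order_trans[OF _ abs_le_norm_inf[OF assms(3)]]) simp
  finally show ?thesis .
qed

lemma lstm_layer_step_in_Sset:
  fixes nx nc l k :: nat and xmax :: real
    and W U :: "nat \<Rightarrow> gate \<Rightarrow> nat \<Rightarrow> nat \<Rightarrow> real" and b :: "nat \<Rightarrow> gate \<Rightarrow> nat \<Rightarrow> real"
    and xin c h c' h' :: "nat \<Rightarrow> real"
  defines "z \<equiv> lstm_preact nx nc W U b l xin h"
  assumes "0 \<le> xmax"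
    and xin: "\<And>m. m < nin nx nc l \<Longrightarrow> \<bar>xin m\<bar> \<le> xmaxl xmax l"
    and "(c, h) \<in> Sset nx nc xmax W U b l k"
    and c': "\<And>j. j < nc \<Longrightarrow> c' j = sigmoid (z Gf j) * c j + sigmoid (z Gi j) * tanh (z Gc j)"
    and h': "\<And>j. j < nc \<Longrightarrow> h' j = sigmoid (z Go j) * tanh (c' j)"
  shows "(c', h') \<in> Sset nx nc xmax W U b l k"
proof -
  define e where "e = eta_prev nx nc xmax W U b l k"
  have c: "\<And>j. j < nc \<Longrightarrow> \<bar>c j\<bar> \<le> cbar nx nc xmax W U b l k"
    and "\<And>j. j < nc \<Longrightarrow> \<bar>h j\<bar> \<le> hbar nx nc xmax W U b l k"
    using assms(4) by (auto simp: mem_Sset_iff)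
  moreover have "hbar nx nc xmax W U b l k \<le> e"
    unfolding hbar_eq_eta_prev e_def by (rule decseq_SucD[OF decseq_eta_prev[OF assms(2)]])
  ultimately have h: "\<And>m. m < nc \<Longrightarrow> \<bar>h m\<bar> \<le> e"
    by force
  have cbar: "cbar nx nc xmax W U b l k = sigmoid (Ggate nx nc xmax W U b l Gi e)
      * tanh (Gcell nx nc xmax W U b l e) / (1 - sigmoid (Ggate nx nc xmax W U b l Gf e))"
    unfolding cbar_def cbar_of_def e_def ..
  have hbar: "hbar nx nc xmax W U b l k
      = tanh (cbar nx nc xmax W U b l k) * sigmoid (Ggate nx nc xmax W U b l Go e)"
    unfolding hbar_def e_def ..
  have "\<bar>c' j\<bar> \<le> cbar nx nc xmax W U b l k \<and> \<bar>h' j\<bar> \<le> hbar nx nc xmax W U b l k"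
    if "j < nc" for j
  proof -
    have gate: "z g j \<le> Ggate nx nc xmax W U b l g e" for g
      unfolding z_def using xin h \<open>j < nc\<close> by (rule lstm_preact_le_Ggate)
    have cell: "\<bar>z Gc j\<bar> \<le> Gcell nx nc xmax W U b l e"
      unfolding z_def using xin h \<open>j < nc\<close> by (rule abs_lstm_preact_le_Gcell)
    have "\<bar>c' j\<bar> \<le> cbar nx nc xmax W U b l k"
      unfolding c'[OF that] cbar by (intro abs_cell_update_le gate cell c[OF that, unfolded cbar])
    then show ?thesis
      unfolding h'[OF that] hbar using gate by (simp add: abs_hidden_update_le)
  qed
  then show ?thesis
    by (simp add: mem_Sset_iff)
qed

definition layer_input :: "(nat \<Rightarrow> nat \<Rightarrow> real) \<Rightarrow> (nat \<Rightarrow> nat \<Rightarrow> nat \<Rightarrow> real) \<Rightarrow> nat \<Rightarrow> nat \<Rightarrow> nat \<Rightarrow> real"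
  where "layer_input x h l t = (if l = 1 then x t else h (l - 1) (Suc t))"

lemma lstm_traj_update:
  fixes nx nc l t :: nat
    and W U :: "nat \<Rightarrow> gate \<Rightarrow> nat \<Rightarrow> nat \<Rightarrow> real" and b :: "nat \<Rightarrow> gate \<Rightarrow> nat \<Rightarrow> real"
    and x :: "nat \<Rightarrow> nat \<Rightarrow> real" and c h :: "nat \<Rightarrow> nat \<Rightarrow> nat \<Rightarrow> real"
  defines "z \<equiv> lstm_preact nx nc W U b l (layer_input x h l t) (h l t)"
  assumes "lstm_traj L nx nc W U b x c h" and "l \<in> {1..L}" and "j < nc"
  shows "c l (Suc t) j = sigmoid (z Gf j) * c l t j + sigmoid (z Gi j) * tanh (z Gc j)"
    and "h l (Suc t) j = sigmoid (z Go j) * tanh (c l (Suc t) j)"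
  using assms unfolding lstm_traj_def lstm_preact_def layer_input_def Let_def by auto

lemma lstm_traj_layer_input_bound:
  assumes "\<And>t j. j < nx \<Longrightarrow> \<bar>x t j\<bar> \<le> xmax"
    and "lstm_traj L nx nc W U b x c h" and "l \<in> {1..L}" and "m < nin nx nc l"
  shows "\<bar>layer_input x h l t m\<bar> \<le> xmaxl xmax l"
proof (cases "l = 1")
  case True
  then show ?thesis
    using assms(1,4) by (simp add: layer_input_def xmaxl_def nin_def)
next
  case False
  then have "l - 1 \<in> {1..L}" and "m < nc"
    using assms(3,4) by (auto simp: nin_def)
  then show ?thesis
    using False abs_sigmoid_mult_tanh_le_1
    by (simp add: layer_input_def xmaxl_def lstm_traj_update(2)[OF assms(2)])
qed

lemma lstm_traj_Sset_invariant:
  assumes "0 \<le> xmax" and "\<And>t j. j < nx \<Longrightarrow> \<bar>x t j\<bar> \<le> xmax"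
    and "lstm_traj L nx nc W U b x c h" and "l \<in> {1..L}"
    and "(c l 0, h l 0) \<in> Sset nx nc xmax W U b l k"
  shows "(c l t, h l t) \<in> Sset nx nc xmax W U b l k"
proof (induction t)
  case 0
  show ?case by (fact assms(5))
next
  case (Suc t)
  show ?case
    using assms(1) lstm_traj_layer_input_bound[OF assms(2-4)] Suc.IH
      lstm_traj_update[OF assms(3,4)]
    by (rule lstm_layer_step_in_Sset)
qed

theorem proposition4p1:
  fixes L nx nc :: nat and xmax :: real
    and W U :: "nat \<Rightarrow> gate \<Rightarrow> nat \<Rightarrow> nat \<Rightarrow> real"
    and b :: "nat \<Rightarrow> gate \<Rightarrow> nat \<Rightarrow> real"
    and l k :: nat
  assumes "xmax > 0" and "l \<in> {1..L}"
  shows "(\<forall>x c h.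
            (\<forall>t. \<forall>j<nx. \<bar>x t j\<bar> \<le> xmax)
          \<and> (\<forall>l'\<in>{1..L}. \<forall>j<nc. \<bar>h l' 0 j\<bar> < 1)
          \<and> lstm_traj L nx nc W U b x c h
          \<and> (c l 0, h l 0) \<in> Sset nx nc xmax W U b l k
          \<longrightarrow> (\<forall>t. (c l t, h l t) \<in> Sset nx nc xmax W U b l k))
       \<and> (\<forall>k'. Sset nx nc xmax W U b l (Suc k') \<subseteq> Sset nx nc xmax W U b l k')"
proof -
  have "0 \<le> xmax"
    using assms(1) by simp
  then show ?thesis
    using lstm_traj_Sset_invariant[OF _ _ _ assms(2)] Sset_Suc_subset by blast
qed

end
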